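(* Let $\sigma:[0,\infty)\to[0,\infty)$ be nondecreasing with $\lim_{t\to\infty}\sigma(t)=\infty$. If $\gamma(\sigma)>1$, then $\gamma(\sigma)=\gamma((\sigma^{\star})^{\iota})+1$.
   Context: Upper Legendre conjugate: $\sigma^{\star}(s):=\sup_{t\ge0}\{\sigma(t)-st\}$ for $s>0$; $(\sigma^{\star})^{\iota}(t):=\sigma^{\star}(1/t)$ for $t>0$. For a nondecreasing function $\sigma$ tending to $\infty$ and $\gamma>0$, $(P_{\sigma,\gamma})$ holds if there is $K>1$ with $\limsup_{t\to\infty}\sigma(K^{\gamma}t)/\sigma(t)<K$; $\gamma(\sigma):=\sup\{\gamma>0:(P_{\sigma,\gamma})\text{ holds}\}$, and $:=0$ if none holds. *)

theory Defs
  imports "HOL-Analysis.Analysis" "HOL-Library.Liminf_Limsup"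
begin

definition sigma_star :: "(real \<Rightarrow> real) \<Rightarrow> real \<Rightarrow> real" where
  "sigma_star \<sigma> s = (SUP t\<in>{0..}. \<sigma> t - s * t)"

definition sigma_star_iota :: "(real \<Rightarrow> real) \<Rightarrow> real \<Rightarrow> real" where
  "sigma_star_iota \<sigma> t = sigma_star \<sigma> (1 / t)"

definition P_prop :: "(real \<Rightarrow> real) \<Rightarrow> real \<Rightarrow> bool" where
  "P_prop \<sigma> \<gamma> \<longleftrightarrow>
     (\<exists>K>1. Limsup at_top (\<lambda>t. ereal (\<sigma> (K powr \<gamma> * t) / \<sigma> t)) < ereal K)"

definition gamma_idx :: "(real \<Rightarrow> real) \<Rightarrow> ereal" where
  "gamma_idx \<sigma> = (if \<exists>\<gamma>>0. P_prop \<sigma> \<gamma>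
                    then Sup (ereal ` {\<gamma>. \<gamma> > 0 \<and> P_prop \<sigma> \<gamma>}) else 0)"

end

theory Submission
  imports Defs
begin

text \<open>
  Property (P_{\<sigma>,\<gamma>}) holds exactly when \<sigma> eventually satisfies a power bound
  \<sigma>(l t) \<le> C l^a \<sigma>(t) for all l \<ge> 1 with some exponent a < 1/\<gamma>: one direction
  iterates the limsup estimate along the powers of K^\<gamma>, the other picks K with
  C K^(a\<gamma>) < K. Such power bounds pass through the conjugate: an exponent a < 1 for \<sigma>
  gives the exponent a/(1-a) for (\<sigma>*)^\<iota>, and an exponent b for (\<sigma>*)^\<iota> gives b/(1+b) for \<sigma>,
  both by comparing the terms of the Young-type inequality \<sigma>(u) \<le> (\<sigma>*)^\<iota>(t) + u/t at
  suitably dilated arguments. As a(\<gamma>+1) < 1 iff (a/(1-a))\<gamma> < 1, the properties (P_{\<sigma>,\<gamma>+1})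
  and (P_{(\<sigma>*)^\<iota>,\<gamma>}) are equivalent, so the two index sets differ by a shift of 1. The
  hypothesis \<gamma>(\<sigma>) > 1 provides an exponent a < 1, which is what makes \<sigma>* finite.
\<close>

definition power_growth_bound :: "(real \<Rightarrow> real) \<Rightarrow> real \<Rightarrow> bool" where
  "power_growth_bound f a \<longleftrightarrow>
     (\<exists>C\<ge>1. \<exists>T>0. \<forall>t\<ge>T. f t > 0 \<and> (\<forall>l\<ge>1. f (l * t) \<le> C * l powr a * f t))"

lemma P_prop_if_power_growth_bound:
  assumes bound: "power_growth_bound f a" and a: "a \<ge> 0" and g: "g > 0" and ag: "a * g < 1"
  shows "P_prop f g"
proof -
  obtain C T where C: "C \<ge> 1"
    and H: "\<forall>t\<ge>T. f t > 0 \<and> (\<forall>l\<ge>1. f (l * t) \<le> C * l powr a * f t)"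
    using bound unfolding power_growth_bound_def by blast
  define K where "K = (2 * C) powr (1 / (1 - a * g))"
  have K1: "K > 1" unfolding K_def using C ag by (simp add: gr_one_powr)
  have "C * K powr (a * g) < 2 * C * K powr (a * g)" using C K1 by simp
  also have "\<dots> = K powr (1 - a * g) * K powr (a * g)" unfolding K_def using C ag
    by (simp add: powr_powr)
  also have "\<dots> = K" using K1 by (simp add: powr_add[symmetric])
  finally have CK: "C * K powr (a * g) < K" .
  have Kg1: "K powr g \<ge> 1" using K1 g by (simp add: ge_one_powr_ge_zero)
  have "eventually (\<lambda>t. ereal (f (K powr g * t) / f t) \<le> ereal (C * K powr (a * g))) at_top"
    unfolding eventually_at_top_linorder
  proof (intro exI allI impI)
    fix t assume t: "t \<ge> T"
    have "f (K powr g * t) \<le> C * (K powr g) powr a * f t" using H t Kg1 by blast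
    also have "(K powr g) powr a = K powr (a * g)" by (simp add: powr_powr mult.commute)
    finally show "ereal (f (K powr g * t) / f t) \<le> ereal (C * K powr (a * g))"
      using H t by (simp add: divide_le_eq)
  qed
  then have "Limsup at_top (\<lambda>t. ereal (f (K powr g * t) / f t)) \<le> ereal (C * K powr (a * g))"
    by (rule Limsup_bounded)
  also have "\<dots> < ereal K" using CK by simp
  finally show ?thesis unfolding P_prop_def using K1 by blast
qed

lemma power_growth_bound_if_dilation_step:
  fixes f :: "real \<Rightarrow> real"
  assumes mono: "mono_on {T..} f" and pos: "\<And>t. t \<ge> T \<Longrightarrow> f t > 0" and T: "T > 0"
    and D: "D > 1" and L: "L \<ge> 1" and step: "\<And>t. t \<ge> T \<Longrightarrow> f (D * t) \<le> L * f t"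
  shows "power_growth_bound f (log D L)"
proof -
  have iterate: "f (D ^ n * t) \<le> L ^ n * f t" if "t \<ge> T" for n t
    using that
  proof (induction n arbitrary: t)
    case 0
    then show ?case by simp
  next
    case (Suc n)
    have "t \<le> D * t" using Suc.prems T D by simp
    then have "T \<le> D * t" using Suc.prems by linarith
    then have "f (D ^ n * (D * t)) \<le> L ^ n * f (D * t)" by (rule Suc.IH)
    then have "f (D ^ Suc n * t) \<le> L ^ n * f (D * t)" by (simp add: mult_ac)
    also have "\<dots> \<le> L ^ n * (L * f t)" using step[OF Suc.prems] L by simp
    finally show ?case by (simp add: mult_ac)
  qed
  have "f (l * t) \<le> L * l powr (log D L) * f t" if t: "t \<ge> T" and l: "l \<ge> 1" for t l
  proof -
    define n where "n = nat \<lfloor>log D l\<rfloor>"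
    have "\<lfloor>log D l\<rfloor> = int n" unfolding n_def using l D by simp
    then have "D powr real n \<le> l \<and> l < D powr real (n + 1)" using l D
      by (simp add: floor_log_eq_powr_iff add.commute)
    then have Dn: "D ^ n \<le> l" "l < D ^ (n + 1)" using D
      unfolding powr_realpow[OF order.strict_trans[OF zero_less_one D]] by auto
    have "t \<le> l * t" using l t T by simp
    moreover have "l * t \<le> D ^ (n + 1) * t" using Dn t T by (simp add: mult_right_mono)
    ultimately have "f (l * t) \<le> f (D ^ (n + 1) * t)"
      using t by (intro mono_onD[OF mono]) auto
    also have "\<dots> \<le> L ^ (n + 1) * f t" using iterate t by blast
    also have "\<dots> = L * L ^ n * f t" by simp
    also have "L ^ n \<le> l powr (log D L)"
    proof -
      have "L ^ n = (D powr log D L) powr real n" using D L by (simp add: powr_realpow)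
      also have "\<dots> = (D ^ n) powr (log D L)" using D by (simp add: powr_powr_swap powr_realpow)
      also have "\<dots> \<le> l powr (log D L)" using Dn D L by (simp add: powr_mono2)
      finally show ?thesis .
    qed
    finally show ?thesis using pos[OF t] L by (simp add: mult_right_mono)
  qed
  then show ?thesis unfolding power_growth_bound_def using L T pos by blast
qed

lemma power_growth_bound_if_P_prop:
  fixes f :: "real \<Rightarrow> real"
  assumes mono: "mono_on {T..} f" and pos: "\<And>t. t \<ge> T \<Longrightarrow> f t > 0" and T: "T > 0"
    and g: "g > 0" and P: "P_prop f g"
  shows "\<exists>a\<ge>0. a * g < 1 \<and> power_growth_bound f a"
proof -
  obtain K where K: "K > 1" and lim_K: "Limsup at_top (\<lambda>t. ereal (f (K powr g * t) / f t)) < ereal K"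
    using P unfolding P_prop_def by blast
  obtain z where lim_z: "Limsup at_top (\<lambda>t. ereal (f (K powr g * t) / f t)) < z" and "z < ereal K"
    using dense[OF lim_K] by blast
  then obtain L0 where z: "z = ereal L0" and "L0 < K" by (cases z) auto
  define L where "L = max L0 1"
  have L: "1 \<le> L" "L < K" unfolding L_def using \<open>L0 < K\<close> K by auto
  have "Limsup at_top (\<lambda>t. ereal (f (K powr g * t) / f t)) < ereal L"
    using lim_z unfolding z L_def by (rule order.strict_trans2) simp
  from Limsup_lessD[OF this] have "eventually (\<lambda>t. f (K powr g * t) / f t < L) at_top"
    by simp
  then obtain T1 where T1: "\<And>t. t \<ge> T1 \<Longrightarrow> f (K powr g * t) / f t < L"
    unfolding eventually_at_top_linorder by blast
  define T' where "T' = max T T1"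
  have "f (K powr g * t) \<le> L * f t" if "t \<ge> T'" for t
    using T1[of t] pos[of t] that unfolding T'_def by (simp add: divide_less_eq)
  moreover have "mono_on {T'..} f" using mono unfolding T'_def by (rule mono_on_subset) auto
  ultimately have "power_growth_bound f (log (K powr g) L)"
    using pos K g L T
    by (intro power_growth_bound_if_dilation_step[where T = T']) (auto simp: T'_def gr_one_powr)
  moreover have "log (K powr g) L = log K L / g" using K g by (simp add: log_def ln_powr)
  moreover have "log K L < 1" "log K L \<ge> 0" using K L by auto
  ultimately show ?thesis using g by (intro exI[of _ "log K L / g"]) auto
qed

lemma P_prop_iff_power_growth_bound:
  fixes f :: "real \<Rightarrow> real"
  assumes mono: "mono_on {T..} f" and lim: "filterlim f at_top at_top" and g: "g > 0"
  shows "P_prop f g \<longleftrightarrow> (\<exists>a\<ge>0. a * g < 1 \<and> power_growth_bound f a)"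
proof -
  obtain U where U: "\<And>t. t \<ge> U \<Longrightarrow> f t \<ge> 1"
    using lim unfolding filterlim_at_top eventually_at_top_linorder by blast
  define T' where "T' = max (max T U) 1"
  have "mono_on {T'..} f" using mono unfolding T'_def by (rule mono_on_subset) auto
  moreover have "\<And>t. t \<ge> T' \<Longrightarrow> f t > 0" using U unfolding T'_def by force
  moreover have "T' > 0" unfolding T'_def by simp
  ultimately show ?thesis
    using g P_prop_if_power_growth_bound power_growth_bound_if_P_prop by blast
qed

lemma le_powr_if_power_growth_bound:
  fixes \<sigma> :: "real \<Rightarrow> real"
  assumes nonneg: "\<forall>t\<ge>0. \<sigma> t \<ge> 0" and mono: "mono_on {0..} \<sigma>"
    and bound: "power_growth_bound \<sigma> a"
  shows "\<exists>A B. B \<ge> 0 \<and> (\<forall>u\<ge>0. \<sigma> u \<le> A + B * u powr a)"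
proof -
  obtain C T where C: "C \<ge> 1" and T: "T > 0"
    and H: "\<forall>t\<ge>T. \<sigma> t > 0 \<and> (\<forall>l\<ge>1. \<sigma> (l * t) \<le> C * l powr a * \<sigma> t)"
    using bound unfolding power_growth_bound_def by blast
  define B where "B = C * \<sigma> T / T powr a"
  have B: "B \<ge> 0" unfolding B_def using C H T by (simp add: less_imp_le)
  have "\<sigma> u \<le> \<sigma> T + B * u powr a" if u: "u \<ge> 0" for u
  proof (cases "u \<le> T")
    case True
    then have "\<sigma> u \<le> \<sigma> T" using mono u T by (auto intro: mono_onD)
    moreover have "B * u powr a \<ge> 0" using B by simp
    ultimately show ?thesis by linarith
  next
    case False
    then have "u / T \<ge> 1" using T by simp
    then have "\<sigma> ((u / T) * T) \<le> C * (u / T) powr a * \<sigma> T" using H by (meson order_refl)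
    also have "\<dots> = B * u powr a" unfolding B_def using T u by (simp add: powr_divide)
    finally show ?thesis using nonneg[rule_format, of T] T by simp
  qed
  then show ?thesis using B by blast
qed

lemma bdd_above_powr_minus_linear:
  fixes a B t :: real
  assumes "0 \<le> a" "a < 1" "B \<ge> 0" "t > 0"
  shows "bdd_above ((\<lambda>u. B * u powr a - u / t) ` {0..})"
proof (rule bdd_aboveI2)
  fix u :: real assume "u \<in> {0..}"
  then have u: "u \<ge> 0" by simp
  define R where "R = (B * t) powr (1 / (1 - a))"
  show "B * u powr a - u / t \<le> B * R powr a"
  proof (cases "u \<le> R")
    case True
    then have "B * u powr a \<le> B * R powr a" using u assms by (simp add: mult_left_mono powr_mono2)
    moreover have "u / t \<ge> 0" using u assms by simp
    ultimately show ?thesis by linarith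
  next
    case False
    have "B * t = R powr (1 - a)" unfolding R_def using assms by (simp add: powr_powr)
    also have "\<dots> \<le> u powr (1 - a)"
      using False assms by (intro powr_mono2) (auto simp: R_def)
    finally have "u powr a * (B * t) \<le> u powr a * u powr (1 - a)" by (simp add: mult_left_mono)
    also have "\<dots> = u" using False assms u by (simp add: powr_add[symmetric])
    finally have "B * u powr a \<le> u / t" using assms by (simp add: le_divide_eq mult_ac)
    moreover have "B * R powr a \<ge> 0" using assms by simp
    ultimately show ?thesis by linarith
  qed
qed

lemma bdd_above_conjugate_if_power_growth_bound:
  fixes \<sigma> :: "real \<Rightarrow> real"
  assumes nonneg: "\<forall>t\<ge>0. \<sigma> t \<ge> 0" and mono: "mono_on {0..} \<sigma>"
    and bound: "power_growth_bound \<sigma> a" and a: "0 \<le> a" "a < 1" and t: "t > 0"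
  shows "bdd_above ((\<lambda>u. \<sigma> u - u / t) ` {0..})"
proof -
  obtain A B where B: "B \<ge> 0" and le: "\<And>u. u \<ge> 0 \<Longrightarrow> \<sigma> u \<le> A + B * u powr a"
    using le_powr_if_power_growth_bound[OF nonneg mono bound] by blast
  obtain M where "\<And>u. u \<ge> 0 \<Longrightarrow> B * u powr a - u / t \<le> M"
    using bdd_above_powr_minus_linear[OF a B t] by (auto simp: bdd_above_def)
  then have "\<And>u. u \<ge> 0 \<Longrightarrow> \<sigma> u - u / t \<le> A + M" using le by fastforce
  then show ?thesis by (intro bdd_aboveI2) auto
qed

lemma bdd_above_conjugate_if_P_prop:
  fixes \<sigma> :: "real \<Rightarrow> real"
  assumes nonneg: "\<forall>t\<ge>0. \<sigma> t \<ge> 0" and mono: "mono_on {0..} \<sigma>"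
    and lim: "filterlim \<sigma> at_top at_top" and P: "P_prop \<sigma> \<gamma>" and \<gamma>: "\<gamma> > 1"
  shows "\<forall>t>0. bdd_above ((\<lambda>u. \<sigma> u - u / t) ` {0..})"
proof -
  obtain a where a: "a \<ge> 0" "a * \<gamma> < 1" "power_growth_bound \<sigma> a"
    using P_prop_iff_power_growth_bound[OF mono lim] P \<gamma> by force
  have "a \<le> a * \<gamma>" using a \<gamma> by (simp add: mult_le_cancel_left1)
  with a have "a < 1" by linarith
  then show ?thesis using bdd_above_conjugate_if_power_growth_bound[OF nonneg mono a(3) a(1)] by simp
qed

lemma ex_dilation_crossing:
  fixes g :: "real \<Rightarrow> real"
  assumes T: "T > 0" and q: "q > 1" and c: "c > 0"
    and lower: "\<And>t. t \<ge> T \<Longrightarrow> c * t \<le> g t" and u: "g T \<le> u"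
  shows "\<exists>t\<ge>T. g t \<le> u \<and> u < g (q * t)"
proof -
  define S where "S = {t. T \<le> t \<and> g t \<le> u}"
  have "T \<in> S" unfolding S_def using u by simp
  have bdd: "bdd_above S"
  proof (rule bdd_aboveI)
    fix t assume "t \<in> S"
    then have "c * t \<le> u" unfolding S_def using lower by fastforce
    then show "t \<le> u / c" using c by (simp add: le_divide_eq mult.commute)
  qed
  have "T \<le> Sup S" using \<open>T \<in> S\<close> bdd by (rule cSup_upper)
  then have "Sup S / q < Sup S" using T q by (simp add: divide_less_eq)
  then obtain t where "t \<in> S" and t: "Sup S / q < t" using \<open>T \<in> S\<close> less_cSupE by blast
  have "q * t \<notin> S"
  proof
    assume "q * t \<in> S"
    then have "q * t \<le> Sup S" using bdd by (rule cSup_upper)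
    then show False using t q by (simp add: divide_less_eq mult.commute)
  qed
  moreover have "T \<le> t" using \<open>t \<in> S\<close> unfolding S_def by simp
  moreover from this have "t \<le> q * t" using T q by simp
  ultimately have "T \<le> q * t" by linarith
  then show ?thesis using \<open>t \<in> S\<close> \<open>q * t \<notin> S\<close> unfolding S_def by auto
qed

lemma Sup_ereal_eq_Sup_shift_add_one:
  fixes A :: "real set"
  assumes "x \<in> A" "x > 1"
  shows "Sup (ereal ` A) = Sup (ereal ` {y. y > 0 \<and> y + 1 \<in> A}) + 1"
proof (rule antisym)
  let ?B = "{y. y > 0 \<and> y + 1 \<in> A}"
  have "x - 1 \<in> ?B" using assms by simp
  show "Sup (ereal ` A) \<le> Sup (ereal ` ?B) + 1"
  proof (rule Sup_least)
    fix z assume "z \<in> ereal ` A"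
    then obtain y where y: "y \<in> A" "z = ereal y" by blast
    show "z \<le> Sup (ereal ` ?B) + 1"
    proof (cases "y > 1")
      case True
      then have "ereal (y - 1) \<le> Sup (ereal ` ?B)" using y by (simp add: Sup_upper)
      then show ?thesis using y add_right_mono[of "ereal (y - 1)" _ 1] by simp
    next
      case False
      have "ereal (x - 1) \<le> Sup (ereal ` ?B)" using \<open>x - 1 \<in> ?B\<close> by (simp add: Sup_upper)
      then have "ereal (x - 1) + 1 \<le> Sup (ereal ` ?B) + 1" by (rule add_right_mono)
      moreover have "z \<le> ereal (x - 1) + 1" using y False assms by simp
      ultimately show ?thesis by (rule order_trans[rotated])
    qed
  qed
  have "?B \<noteq> {}" using \<open>x - 1 \<in> ?B\<close> by blast
  from SUP_ereal_add_left[OF this, of 1 ereal]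
  have "Sup (ereal ` ?B) + 1 = (SUP y\<in>?B. ereal y + 1)" by simp
  also have "\<dots> \<le> Sup (ereal ` A)"
    by (rule SUP_least) (simp add: Sup_upper)
  finally show "Sup (ereal ` ?B) + 1 \<le> Sup (ereal ` A)" .
qed

lemma sigma_star_iota_eq: "sigma_star_iota \<sigma> t = (SUP u\<in>{0..}. \<sigma> u - u / t)"
  unfolding sigma_star_iota_def sigma_star_def by simp

lemma sigma_star_iota_le: "(\<And>u. u \<ge> 0 \<Longrightarrow> \<sigma> u - u / t \<le> M) \<Longrightarrow> sigma_star_iota \<sigma> t \<le> M"
  unfolding sigma_star_iota_eq by (rule cSUP_least) auto

context
  fixes \<sigma> :: "real \<Rightarrow> real"
  assumes conjugate_bdd: "\<forall>t>0. bdd_above ((\<lambda>u. \<sigma> u - u / t) ` {0..})"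
begin

lemma sigma_star_iota_ge: "t > 0 \<Longrightarrow> u \<ge> 0 \<Longrightarrow> \<sigma> u - u / t \<le> sigma_star_iota \<sigma> t"
  unfolding sigma_star_iota_eq using conjugate_bdd by (intro cSUP_upper) auto

lemma sigma_star_iota_mono: "0 < t \<Longrightarrow> t \<le> t' \<Longrightarrow> sigma_star_iota \<sigma> t \<le> sigma_star_iota \<sigma> t'"
proof (rule sigma_star_iota_le)
  fix u :: real assume t: "0 < t" "t \<le> t'" and u: "u \<ge> 0"
  have "u / t' \<le> u / t" using t u by (simp add: frac_le)
  moreover have "\<sigma> u - u / t' \<le> sigma_star_iota \<sigma> t'" using t u by (intro sigma_star_iota_ge) auto
  ultimately show "\<sigma> u - u / t \<le> sigma_star_iota \<sigma> t'" by simp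
qed

lemma sigma_star_iota_nonneg: "\<sigma> 0 \<ge> 0 \<Longrightarrow> t > 0 \<Longrightarrow> sigma_star_iota \<sigma> t \<ge> 0"
  using sigma_star_iota_ge[of t 0] by simp

lemma filterlim_sigma_star_iota_at_top:
  assumes "filterlim \<sigma> at_top at_top"
  shows "filterlim (sigma_star_iota \<sigma>) at_top at_top"
  unfolding filterlim_at_top eventually_at_top_linorder
proof
  fix M
  obtain U where U: "\<And>u. u \<ge> U \<Longrightarrow> \<sigma> u \<ge> M + 1"
    using assms unfolding filterlim_at_top eventually_at_top_linorder by blast
  define u where "u = max U 0"
  have u: "u \<ge> 0" "\<sigma> u \<ge> M + 1" using U unfolding u_def by auto
  have "sigma_star_iota \<sigma> t \<ge> M" if t: "t \<ge> max u 1" for t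
  proof -
    have "u / t \<le> 1" using t u by simp
    moreover have "\<sigma> u - u / t \<le> sigma_star_iota \<sigma> t" using t u by (intro sigma_star_iota_ge) auto
    ultimately show ?thesis using u by simp
  qed
  then show "\<exists>T. \<forall>t\<ge>T. M \<le> sigma_star_iota \<sigma> t" by blast
qed

context
  assumes nonneg: "\<forall>t\<ge>0. \<sigma> t \<ge> 0" and mono: "mono_on {0..} \<sigma>"
    and lim: "filterlim \<sigma> at_top at_top"
begin

lemma sigma_star_iota_dilation_le:
  assumes t: "t > 0" and l: "l > 0" and T: "T \<ge> 0" and \<mu>: "\<mu> > 0" "\<mu> = M * l"
    and dilation: "\<And>v. v \<ge> T \<Longrightarrow> \<sigma> (\<mu> * v) \<le> M * \<sigma> v"
    and below: "\<sigma> T \<le> sigma_star_iota \<sigma> t"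
  shows "sigma_star_iota \<sigma> (l * t) \<le> M * sigma_star_iota \<sigma> t"
proof (rule sigma_star_iota_le)
  fix u :: real assume u: "u \<ge> 0"
  have M: "M > 0" using \<mu> l by (simp add: zero_less_mult_iff)
  show "\<sigma> u - u / (l * t) \<le> M * sigma_star_iota \<sigma> t"
  proof (cases "u / \<mu> \<ge> T")
    case True
    \<comment> \<open>Since \<mu> = M l, the substitution u = \<mu> v turns u / (l t) into M (v / t).\<close>
    have "\<sigma> u - u / (l * t) = \<sigma> (\<mu> * (u / \<mu>)) - M * ((u / \<mu>) / t)"
      using \<mu> l t M by (simp add: field_simps)
    also have "\<dots> \<le> M * (\<sigma> (u / \<mu>) - (u / \<mu>) / t)"
      using dilation[OF True] by (simp add: right_diff_distrib)
    also have "\<dots> \<le> M * sigma_star_iota \<sigma> t"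
      using sigma_star_iota_ge[OF t, of "u / \<mu>"] True T M by simp
    finally show ?thesis .
  next
    case False
    then have "u < T * \<mu>" using \<mu>(1) by (simp add: not_le pos_divide_less_eq)
    then have "u \<le> \<mu> * T" by (simp add: mult.commute)
    then have "\<sigma> u \<le> \<sigma> (\<mu> * T)" using mono u by (auto intro: mono_onD)
    also have "\<dots> \<le> M * \<sigma> T" using dilation by simp
    also have "\<dots> \<le> M * sigma_star_iota \<sigma> t" using below M by simp
    moreover have "u / (l * t) \<ge> 0" using u l t by simp
    ultimately show ?thesis by linarith
  qed
qed

lemma power_growth_bound_sigma_star_iota:
  assumes bound: "power_growth_bound \<sigma> a" and a: "0 \<le> a" "a < 1"
  shows "power_growth_bound (sigma_star_iota \<sigma>) (a / (1 - a))"
proof -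
  obtain C T where C: "C \<ge> 1" and T: "T > 0"
    and H: "\<forall>t\<ge>T. \<sigma> t > 0 \<and> (\<forall>l\<ge>1. \<sigma> (l * t) \<le> C * l powr a * \<sigma> t)"
    using bound unfolding power_growth_bound_def by blast
  obtain T0 where T0: "\<And>t. t \<ge> T0 \<Longrightarrow> sigma_star_iota \<sigma> t \<ge> \<sigma> T + 1"
    using filterlim_sigma_star_iota_at_top[OF lim]
    unfolding filterlim_at_top eventually_at_top_linorder by blast
  define T' where "T' = max T0 1"
  have T': "T' > 0" "\<forall>t\<ge>T'. sigma_star_iota \<sigma> t \<ge> \<sigma> T + 1" using T0 unfolding T'_def by auto
  have "sigma_star_iota \<sigma> (l * t)
      \<le> C powr (1 / (1 - a)) * l powr (a / (1 - a)) * sigma_star_iota \<sigma> t"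
    if t: "t \<ge> T'" and l: "l \<ge> 1" for t l
  proof -
    define \<mu> where "\<mu> = (C * l) powr (1 / (1 - a))"
    have Cl: "C * l \<ge> 1" using mult_mono[of 1 C 1 l] C l by simp
    then have \<mu>: "\<mu> \<ge> 1" unfolding \<mu>_def using a by (simp add: ge_one_powr_ge_zero)
    have "\<mu> = \<mu> powr (1 - a) * \<mu> powr a" using \<mu> by (simp flip: powr_add)
    also have "\<mu> powr (1 - a) = C * l" unfolding \<mu>_def using a Cl by (simp add: powr_powr)
    finally have "\<mu> = C * \<mu> powr a * l" by (simp add: mult_ac)
    moreover have "\<sigma> (\<mu> * v) \<le> C * \<mu> powr a * \<sigma> v" if "v \<ge> T" for v using H that \<mu> by blast
    moreover have "\<sigma> T \<le> sigma_star_iota \<sigma> t" using T' t by force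
    ultimately have "sigma_star_iota \<sigma> (l * t) \<le> C * \<mu> powr a * sigma_star_iota \<sigma> t"
      using \<mu> t T T' l by (intro sigma_star_iota_dilation_le) auto
    also have "C * \<mu> powr a = C powr (1 + a / (1 - a)) * l powr (a / (1 - a))"
      unfolding \<mu>_def using C l by (simp add: powr_powr powr_mult powr_add)
    also have "1 + a / (1 - a) = 1 / (1 - a)" using a by (simp add: field_simps)
    finally show ?thesis .
  qed
  moreover have "sigma_star_iota \<sigma> t > 0" if "t \<ge> T'" for t
  proof -
    have "\<sigma> T \<ge> 0" using nonneg T by simp
    then show ?thesis using T' that by fastforce
  qed
  moreover have "C powr (1 / (1 - a)) \<ge> 1" using C a by (simp add: ge_one_powr_ge_zero)
  ultimately show ?thesis unfolding power_growth_bound_def using T' by blast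
qed

lemma sigma_star_iota_le_sigma:
  assumes t: "t > 0" and u: "2 * t * sigma_star_iota \<sigma> (2 * t) \<le> u"
  shows "sigma_star_iota \<sigma> t \<le> \<sigma> u"
proof (rule sigma_star_iota_le)
  fix v :: real assume v: "v \<ge> 0"
  have "sigma_star_iota \<sigma> (2 * t) \<ge> 0" using nonneg t by (intro sigma_star_iota_nonneg) auto
  then have u0: "u \<ge> 0" using t u by (meson order_trans zero_le_mult_iff less_imp_le zero_le_numeral)
  show "\<sigma> v - v / t \<le> \<sigma> u"
  proof (cases "v \<le> u")
    case True
    then have "\<sigma> v \<le> \<sigma> u" using mono v by (auto intro: mono_onD)
    moreover have "v / t \<ge> 0" using v t by simp
    ultimately show ?thesis by linarith
  next
    case False
    have "\<sigma> v - v / (2 * t) \<le> sigma_star_iota \<sigma> (2 * t)"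
      using t v by (intro sigma_star_iota_ge) auto
    moreover have "sigma_star_iota \<sigma> (2 * t) \<le> u / (2 * t)"
      using u t by (simp add: le_divide_eq mult.commute)
    moreover have "u / (2 * t) \<le> v / (2 * t)" using False t by (simp add: divide_right_mono)
    moreover have "v / t = v / (2 * t) + v / (2 * t)" by simp
    moreover have "\<sigma> u \<ge> 0" using nonneg u0 by simp
    ultimately show ?thesis by linarith
  qed
qed

lemma power_growth_bound_if_sigma_star_iota:
  assumes bound: "power_growth_bound (sigma_star_iota \<sigma>) b" and b: "b \<ge> 0"
  shows "power_growth_bound \<sigma> (b / (1 + b))"
proof -
  let ?w = "sigma_star_iota \<sigma>"
  obtain C T where C: "C \<ge> 1" and T: "T > 0"
    and H: "\<forall>t\<ge>T. ?w t > 0 \<and> (\<forall>l\<ge>1. ?w (l * t) \<le> C * l powr b * ?w t)"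
    using bound unfolding power_growth_bound_def by blast
  define g where "g t = 2 * t * ?w (2 * t)" for t
  define c where "c = 4 * C * 4 powr b"
  have c: "c > 0" unfolding c_def using C by simp
  have bracket: "\<exists>t\<ge>T. ?w t \<le> \<sigma> u \<and> u \<le> c * t * ?w t" if u: "g T \<le> u" for u
  proof -
    have "2 * ?w T * t \<le> g t" if "t \<ge> T" for t
      using sigma_star_iota_mono[of T "2 * t"] that T H unfolding g_def by (simp add: mult_left_mono)
    then obtain t where t: "t \<ge> T" "g t \<le> u" "u < g (2 * t)"
      using ex_dilation_crossing[of T 2 "2 * ?w T" g u] H T u by auto
    have "?w t \<le> \<sigma> u" using sigma_star_iota_le_sigma t T unfolding g_def by simp
    moreover have "g (2 * t) \<le> c * t * ?w t"
    proof -
      have "?w (4 * t) \<le> C * 4 powr b * ?w t" using H t by simp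
      then show ?thesis unfolding g_def c_def using t T by (simp add: mult_left_mono)
    qed
    ultimately show ?thesis using t by force
  qed
  have gT: "g T > 0" unfolding g_def using H T by simp
  define a where "a = b / (1 + b)"
  have "\<sigma> (l * u) \<le> (C + c) * l powr a * \<sigma> u" if u: "g T \<le> u" and l: "l \<ge> 1" for u l
  proof -
    obtain t where t: "t \<ge> T" and w_le: "?w t \<le> \<sigma> u" and u_le: "u \<le> c * t * ?w t"
      using bracket[OF u] by blast
    \<comment> \<open>This \<mu> balances the two terms of \<sigma>(l u) \<le> (\<sigma>*)^\<iota>(\<mu> t) + l u / (\<mu> t).\<close>
    define \<mu> where "\<mu> = l powr (1 / (1 + b))"
    have \<mu>: "\<mu> \<ge> 1" unfolding \<mu>_def using l b by (simp add: ge_one_powr_ge_zero)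
    have \<mu>_b: "\<mu> powr b = l powr a" unfolding \<mu>_def a_def by (simp add: powr_powr)
    have l_\<mu>: "l / \<mu> = l powr a"
    proof -
      have "l / \<mu> = l powr (1 - 1 / (1 + b))" unfolding \<mu>_def using l by (simp add: powr_diff)
      also have "1 - 1 / (1 + b) = a" unfolding a_def using b by (simp add: field_simps)
      finally show ?thesis .
    qed
    have "\<sigma> (l * u) \<le> ?w (\<mu> * t) + (l / \<mu>) * (u / t)"
      using sigma_star_iota_ge[of "\<mu> * t" "l * u"] \<mu> t T u l gT by simp
    also have "\<dots> \<le> C * l powr a * ?w t + l powr a * (c * ?w t)"
    proof (rule add_mono)
      show "?w (\<mu> * t) \<le> C * l powr a * ?w t" using H t \<mu> \<mu>_b by metis
      show "(l / \<mu>) * (u / t) \<le> l powr a * (c * ?w t)"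
        unfolding l_\<mu> using u_le t T by (intro mult_left_mono) (simp_all add: divide_le_eq mult_ac)
    qed
    also have "\<dots> = (C + c) * l powr a * ?w t" by (simp add: algebra_simps)
    also have "\<dots> \<le> (C + c) * l powr a * \<sigma> u"
      using w_le C c_def by (intro mult_left_mono) auto
    finally show ?thesis .
  qed
  moreover note gT
  moreover have "\<sigma> u > 0" if "g T \<le> u" for u
    using bracket[OF that] H by (meson less_le_trans)
  moreover have "C + c \<ge> 1" using C c by simp
  ultimately show ?thesis unfolding power_growth_bound_def a_def[symmetric] by blast
qed

lemma P_prop_sigma_star_iota_iff:
  assumes g: "g > 0"
  shows "P_prop (sigma_star_iota \<sigma>) g \<longleftrightarrow> P_prop \<sigma> (g + 1)"
proof -
  have P_\<sigma>: "P_prop \<sigma> (g + 1) \<longleftrightarrow> (\<exists>a\<ge>0. a * (g + 1) < 1 \<and> power_growth_bound \<sigma> a)"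
    using mono lim g by (intro P_prop_iff_power_growth_bound) auto
  have "mono_on {1..} (sigma_star_iota \<sigma>)"
    using sigma_star_iota_mono by (intro mono_onI) force
  then have P_w: "P_prop (sigma_star_iota \<sigma>) g
      \<longleftrightarrow> (\<exists>b\<ge>0. b * g < 1 \<and> power_growth_bound (sigma_star_iota \<sigma>) b)"
    using filterlim_sigma_star_iota_at_top[OF lim] g by (intro P_prop_iff_power_growth_bound)
  show ?thesis
  proof
    assume "P_prop (sigma_star_iota \<sigma>) g"
    then obtain b where b: "b \<ge> 0" "b * g < 1" "power_growth_bound (sigma_star_iota \<sigma>) b"
      using P_w by blast
    then have "power_growth_bound \<sigma> (b / (1 + b))" by (intro power_growth_bound_if_sigma_star_iota)
    moreover have "b / (1 + b) * (g + 1) < 1" using b by (simp add: field_simps)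
    ultimately show "P_prop \<sigma> (g + 1)" using P_\<sigma> b by force
  next
    assume "P_prop \<sigma> (g + 1)"
    then obtain a where a: "a \<ge> 0" "a * (g + 1) < 1" "power_growth_bound \<sigma> a"
      using P_\<sigma> by blast
    moreover have "a \<le> a * (g + 1)" using a g by (simp add: mult_le_cancel_left1)
    ultimately have "a < 1" by linarith
    then have "power_growth_bound (sigma_star_iota \<sigma>) (a / (1 - a))"
      using a by (intro power_growth_bound_sigma_star_iota)
    moreover have "a / (1 - a) * g < 1" using a \<open>a < 1\<close> by (simp add: field_simps)
    ultimately show "P_prop (sigma_star_iota \<sigma>) g" using P_w a \<open>a < 1\<close> by force
  qed
qed

end

end

lemma gamma_idx_eq_Sup:
  assumes "\<exists>\<gamma>>0. P_prop f \<gamma>"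
  shows "gamma_idx f = Sup (ereal ` {\<gamma>. \<gamma> > 0 \<and> P_prop f \<gamma>})"
  using assms unfolding gamma_idx_def by auto

lemma P_prop_if_gamma_idx_gt:
  assumes "gamma_idx f > ereal c" "c \<ge> 0"
  shows "\<exists>\<gamma>>c. P_prop f \<gamma>"
  using assms unfolding gamma_idx_def by (auto split: if_splits simp: less_SUP_iff)

theorem corollary2p25:
  fixes \<sigma> :: "real \<Rightarrow> real"
  assumes nonneg: "\<forall>t\<ge>0. \<sigma> t \<ge> 0"
    and mono: "mono_on {0..} \<sigma>"
    and lim: "filterlim \<sigma> at_top at_top"
    and gt1: "gamma_idx \<sigma> > 1"
  shows "gamma_idx \<sigma> = gamma_idx (sigma_star_iota \<sigma>) + 1"
proof -
  obtain x where x: "x > 1" "P_prop \<sigma> x"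
    using gt1 P_prop_if_gamma_idx_gt[of 1 \<sigma>] by (auto simp: one_ereal_def)
  have conjugate_bdd: "\<forall>t>0. bdd_above ((\<lambda>u. \<sigma> u - u / t) ` {0..})"
    by (rule bdd_above_conjugate_if_P_prop[OF nonneg mono lim x(2) x(1)])
  define S where "S = {\<gamma>. \<gamma> > 0 \<and> P_prop \<sigma> \<gamma>}"
  have shift: "{\<gamma>. \<gamma> > 0 \<and> \<gamma> + 1 \<in> S} = {\<gamma>. \<gamma> > 0 \<and> P_prop (sigma_star_iota \<sigma>) \<gamma>}"
    unfolding S_def using P_prop_sigma_star_iota_iff[OF conjugate_bdd nonneg mono lim] by auto
  have "x - 1 \<in> {\<gamma>. \<gamma> > 0 \<and> P_prop (sigma_star_iota \<sigma>) \<gamma>}"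
    unfolding shift[symmetric] S_def using x by simp
  then have "gamma_idx (sigma_star_iota \<sigma>) = Sup (ereal ` {\<gamma>. \<gamma> > 0 \<and> \<gamma> + 1 \<in> S})"
    unfolding shift by (intro gamma_idx_eq_Sup) blast
  moreover have "gamma_idx \<sigma> = Sup (ereal ` S)"
    unfolding S_def using x by (intro gamma_idx_eq_Sup) (meson less_trans zero_less_one)
  moreover have "Sup (ereal ` S) = Sup (ereal ` {\<gamma>. \<gamma> > 0 \<and> \<gamma> + 1 \<in> S}) + 1"
    by (rule Sup_ereal_eq_Sup_shift_add_one[of x]) (use x in \<open>auto simp: S_def\<close>)
  ultimately show ?thesis by simp
qed

end
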